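(* Fix integers $K\ge1$, $N\ge1$, $d\in[0,1]$, and an arbitrary distribution of the input $\mathbf X\in\{1,\dots,2K\}^N$ of the $2K$-ary i.i.d. deletion channel with deletion probability $d$. With the decomposition $(\mathbf X_1,\dots,\mathbf X_K,\mathbf F_x)$, $(\mathbf Y_1,\dots,\mathbf Y_K,\mathbf F_y)$ described in the context, for every $k\in\{1,\dots,K\}$, $$I(\mathbf X_1,\dots,\mathbf X_K,\mathbf F_x;\mathbf Y_k\mid \mathbf Y_1,\dots,\mathbf Y_{k-1})\le \mathbb E\{N_k\}\,C_2(d)+2\log(N+1),$$ where $C_2(d)$ is the capacity of the binary i.i.d. deletion channel with deletion probability $d$.
   Context: The $2K$-ary i.i.d. deletion channel with deletion probability $d$: an input $\mathbf X=(x_1,\dots,x_N)\in\{1,\dots,2K\}^N$ is sent; each symbol is independently (and independently of $\mathbf X$) deleted with probability $d$ or delivered unchanged with probability $1-d$; the output $\mathbf Y=(y_1,\dots,y_M)$ is the subsequence of surviving symbols in order. The binary i.i.d. deletion channel is the same with alphabet of size 2, and its capacity is $C_2(d)=\lim_{N\to\infty}\max_{P(\mathbf X)}\frac1N I(\mathbf X;\mathbf Y)$. Decomposition: for $k\in\{1,\dots,K\}$ the $k$-th subchannel carries the symbols $2k-1$ and $2k$. Let $\mathbf X_k$ be the subsequence of $\mathbf X$ consisting of the symbols lying in $\{2k-1,2k\}$ (a binary sequence), of length $N_k$, and $\mathbf Y_k$ the subsequence of $\mathbf Y$ consisting of the symbols lying in $\{2k-1,2k\}$, of length $M_k$; thus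 $\mathbf Y_k$ is the output of a binary i.i.d. deletion channel with deletion probability $d$ and input $\mathbf X_k$. Let $\mathbf F_x=(f_x[1],\dots,f_x[N])$ and $\mathbf F_y=(f_y[1],\dots,f_y[M])$ where $f_x[n]=\lceil x_n/2\rceil$ and $f_y[m]=\lceil y_m/2\rceil$ are the subchannel labels. Then $\mathbf X\leftrightarrow(\mathbf X_1,\dots,\mathbf X_K,\mathbf F_x)$ and $\mathbf Y\leftrightarrow(\mathbf Y_1,\dots,\mathbf Y_K,\mathbf F_y)$ are bijective correspondences. All logarithms are to a common base. *)

theory Defs
  imports "HOL-Probability.Probability"
begin

fun del_chan :: "real \<Rightarrow> 'a list \<Rightarrow> 'a list pmf" where
  "del_chan d [] = return_pmf []"
| "del_chan d (x # xs) =
     bind_pmf (bernoulli_pmf (1 - d)) (\<lambda>keep.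
     bind_pmf (del_chan d xs) (\<lambda>ys.
     return_pmf (if keep then x # ys else ys)))"

definition chan_joint :: "real \<Rightarrow> 'a list pmf \<Rightarrow> ('a list \<times> 'a list) pmf" where
  "chan_joint d P = bind_pmf P (\<lambda>x. map_pmf (\<lambda>y. (x, y)) (del_chan d x))"

definition cond_mutual_info ::
  "real \<Rightarrow> 'w pmf \<Rightarrow> ('w \<Rightarrow> 'a) \<Rightarrow> ('w \<Rightarrow> 'b) \<Rightarrow> ('w \<Rightarrow> 'c) \<Rightarrow> real" where
  "cond_mutual_info b J A B C =
     (let pABC = map_pmf (\<lambda>w. (A w, B w, C w)) J;
          pAC = map_pmf (\<lambda>w. (A w, C w)) J;
          pBC = map_pmf (\<lambda>w. (B w, C w)) J;
          pC = map_pmf C J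
      in (\<Sum>t \<in> set_pmf pABC. case t of (a, bb, c) \<Rightarrow>
            pmf pABC (a, bb, c) *
            log b ((pmf pABC (a, bb, c) * pmf pC c) / (pmf pAC (a, c) * pmf pBC (bb, c)))))"

definition mutual_info :: "real \<Rightarrow> 'w pmf \<Rightarrow> ('w \<Rightarrow> 'a) \<Rightarrow> ('w \<Rightarrow> 'b) \<Rightarrow> real" where
  "mutual_info b J A B = cond_mutual_info b J A B (\<lambda>_. ())"

definition bin_del_max_info :: "real \<Rightarrow> real \<Rightarrow> nat \<Rightarrow> real" where
  "bin_del_max_info b d n =
     (SUP P \<in> {P :: bool list pmf. set_pmf P \<subseteq> {xs. length xs = n}}.
        mutual_info b (chan_joint d P) fst snd)"

definition C2 :: "real \<Rightarrow> real \<Rightarrow> real" where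
  "C2 b d = lim (\<lambda>n. bin_del_max_info b d n / real n)"

definition sublabel :: "nat \<Rightarrow> nat" where
  "sublabel s = (s + 1) div 2"

definition subseq_k :: "nat \<Rightarrow> nat list \<Rightarrow> nat list" where
  "subseq_k k xs = filter (\<lambda>s. sublabel s = k) xs"

definition labels :: "nat list \<Rightarrow> nat list" where
  "labels xs = map sublabel xs"

end

theory Submission
  imports Defs
begin

text \<open>
  For an input distribution \<open>Q\<close> the information carried by the deletion channel is
  \<open>H(Y) - E\<^sub>x H(Y | X = x)\<close>. Since deletions act symbol by symbol, given the input the
  outputs of different subchannels are independent, and the input is determined by its
  subsequences and labels; hence the conditional mutual information in question is at most the
  information the binary channel carries on input \<open>X\<^sub>k\<close>. Conditioning on the length of
  \<open>X\<^sub>k\<close> costs at most \<open>log (N + 1)\<close>. For binary inputs of fixed length \<open>n\<close> the information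
  is at most \<open>n C\<^sub>2(d) + log (n + 1)\<close>: concatenating \<open>m\<close> independent copies of an input
  loses at most \<open>log (n + 1)\<close> per copy (only the block boundary in the output is unknown),
  while the maximal information is subadditive, so by Fekete's lemma its normalised limit
  \<open>C\<^sub>2(d)\<close> exists and bounds these superadditive quantities.
\<close>

section \<open>Entropy of finitely supported distributions\<close>

text \<open>
  A finite sum over the support, so that no integrability side conditions arise; it agrees with
  \<open>measure_pmf.expectation\<close> whenever the support is finite.
\<close>
definition expect :: "'a pmf \<Rightarrow> ('a \<Rightarrow> real) \<Rightarrow> real" where
  "expect p f = (\<Sum>x\<in>set_pmf p. pmf p x * f x)"

definition pmf_entropy :: "real \<Rightarrow> 'a pmf \<Rightarrow> real" where
  "pmf_entropy b p = - expect p (\<lambda>x. log b (pmf p x))"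

lemma expect_eq_expectation:
  "finite (set_pmf p) \<Longrightarrow> expect p f = measure_pmf.expectation p f"
  unfolding expect_def by (subst integral_measure_pmf_real[of "set_pmf p"]) (auto simp: mult.commute)

lemma expect_map_pmf: "finite (set_pmf p) \<Longrightarrow> expect (map_pmf g p) f = expect p (\<lambda>x. f (g x))"
  by (simp add: expect_eq_expectation)

lemma expect_cong: "(\<And>x. x \<in> set_pmf p \<Longrightarrow> f x = g x) \<Longrightarrow> expect p f = expect p g"
  unfolding expect_def by (rule sum.cong) auto

lemma expect_add: "expect p (\<lambda>x. f x + g x) = expect p f + expect p g"
  unfolding expect_def by (simp add: distrib_left sum.distrib)

lemma expect_diff: "expect p (\<lambda>x. f x - g x) = expect p f - expect p g"
  unfolding expect_def by (simp add: right_diff_distrib sum_subtractf)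

lemma expect_cmult: "expect p (\<lambda>x. c * f x) = c * expect p f"
  unfolding expect_def by (simp add: sum_distrib_left mult_ac)

lemma expect_uminus: "expect p (\<lambda>x. - f x) = - expect p f"
  unfolding expect_def by (simp add: sum_negf)

lemma expect_mono: "(\<And>x. x \<in> set_pmf p \<Longrightarrow> f x \<le> g x) \<Longrightarrow> expect p f \<le> expect p g"
  unfolding expect_def by (rule sum_mono) (auto intro: mult_left_mono)

lemma expect_const: "finite (set_pmf p) \<Longrightarrow> expect p (\<lambda>x. c) = c"
  unfolding expect_def by (simp add: sum_distrib_right[symmetric] sum_pmf_eq_1)

lemma expect_return_pmf [simp]: "expect (return_pmf a) f = f a"
  unfolding expect_def by simp

lemma finite_set_bind_pmf:
  "finite (set_pmf p) \<Longrightarrow> (\<And>x. x \<in> set_pmf p \<Longrightarrow> finite (set_pmf (R x))) \<Longrightarrow>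
   finite (set_pmf (bind_pmf p R))"
  by (simp add: set_bind_pmf)

lemma expect_bind_pmf:
  assumes fp: "finite (set_pmf p)" and fR: "\<And>x. x \<in> set_pmf p \<Longrightarrow> finite (set_pmf (R x))"
  shows "expect (bind_pmf p R) f = expect p (\<lambda>x. expect (R x) f)"
proof -
  let ?S = "set_pmf (bind_pmf p R)"
  have fS: "finite ?S" using finite_set_bind_pmf[OF fp fR] .
  have "expect (bind_pmf p R) f = (\<Sum>z\<in>?S. (\<Sum>x\<in>set_pmf p. pmf p x * pmf (R x) z) * f z)"
    unfolding expect_def pmf_bind
    by (rule sum.cong) (auto simp: expect_eq_expectation[OF fp, symmetric] expect_def)
  also have "\<dots> = (\<Sum>x\<in>set_pmf p. pmf p x * (\<Sum>z\<in>?S. pmf (R x) z * f z))"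
    unfolding sum_distrib_left sum_distrib_right by (subst sum.swap) (simp add: mult_ac)
  also have "\<dots> = (\<Sum>x\<in>set_pmf p. pmf p x * expect (R x) f)"
  proof (rule sum.cong)
    fix x assume x: "x \<in> set_pmf p"
    have "(\<Sum>z\<in>?S. pmf (R x) z * f z) = (\<Sum>z\<in>set_pmf (R x). pmf (R x) z * f z)"
      by (rule sum.mono_neutral_right) (use fS x in \<open>auto simp: set_bind_pmf pmf_eq_0_set_pmf\<close>)
    then show "pmf p x * (\<Sum>z\<in>?S. pmf (R x) z * f z) = pmf p x * expect (R x) f"
      by (simp add: expect_def)
  qed simp
  finally show ?thesis by (simp add: expect_def)
qed

lemma pmf_map_pmf_pos: "w \<in> set_pmf J \<Longrightarrow> 0 < pmf (map_pmf V J) (V w)"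
  using pmf_positive[of "V w" "map_pmf V J"] by auto

lemma pmf_entropy_map_pmf: "finite (set_pmf J) \<Longrightarrow>
  pmf_entropy b (map_pmf V J) = - expect J (\<lambda>w. log b (pmf (map_pmf V J) (V w)))"
  unfolding pmf_entropy_def by (simp add: expect_map_pmf)

lemma pmf_map_pmf_mono:
  assumes "w \<in> set_pmf J" "\<And>w'. w' \<in> set_pmf J \<Longrightarrow> V w' = V w \<Longrightarrow> U w' = U w"
  shows "pmf (map_pmf V J) (V w) \<le> pmf (map_pmf U J) (U w)"
proof -
  have "measure J (V -` {V w}) = measure J (V -` {V w} \<inter> set_pmf J)"
    by (simp add: measure_Int_set_pmf)
  also have "\<dots> \<le> measure J (U -` {U w} \<inter> set_pmf J)"
    by (rule measure_pmf.finite_measure_mono) (use assms in blast, simp)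
  also have "\<dots> = measure J (U -` {U w})"
    by (simp add: measure_Int_set_pmf)
  finally show ?thesis by (simp add: pmf_map)
qed

lemma pmf_entropy_map_pmf_mono:
  assumes fin: "finite (set_pmf J)" and b: "b > 1"
    and det: "\<And>w w'. w \<in> set_pmf J \<Longrightarrow> w' \<in> set_pmf J \<Longrightarrow> V w' = V w \<Longrightarrow> U w' = U w"
  shows "pmf_entropy b (map_pmf U J) \<le> pmf_entropy b (map_pmf V J)"
proof -
  have "expect J (\<lambda>w. log b (pmf (map_pmf V J) (V w))) \<le> expect J (\<lambda>w. log b (pmf (map_pmf U J) (U w)))"
  proof (rule expect_mono)
    fix w assume w: "w \<in> set_pmf J"
    have "pmf (map_pmf V J) (V w) \<le> pmf (map_pmf U J) (U w)"
      by (rule pmf_map_pmf_mono[OF w]) (rule det[OF w])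
    then show "log b (pmf (map_pmf V J) (V w)) \<le> log b (pmf (map_pmf U J) (U w))"
      using pmf_map_pmf_pos[OF w, of V] b by simp
  qed
  then show ?thesis by (simp add: pmf_entropy_map_pmf[OF fin])
qed

lemma pmf_entropy_map_pmf_cong:
  assumes fin: "finite (set_pmf J)" and b: "b > 1"
    and eq: "\<And>w w'. w \<in> set_pmf J \<Longrightarrow> w' \<in> set_pmf J \<Longrightarrow> V w' = V w \<longleftrightarrow> U w' = U w"
  shows "pmf_entropy b (map_pmf U J) = pmf_entropy b (map_pmf V J)"
proof (rule antisym)
  show "pmf_entropy b (map_pmf U J) \<le> pmf_entropy b (map_pmf V J)"
    by (rule pmf_entropy_map_pmf_mono[OF fin b]) (use eq in blast)
  show "pmf_entropy b (map_pmf V J) \<le> pmf_entropy b (map_pmf U J)"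
    by (rule pmf_entropy_map_pmf_mono[OF fin b]) (use eq in blast)
qed

lemma pmf_entropy_map_pmf_le:
  "finite (set_pmf p) \<Longrightarrow> b > 1 \<Longrightarrow> pmf_entropy b (map_pmf g p) \<le> pmf_entropy b p"
  using pmf_entropy_map_pmf_mono[of p b "\<lambda>x. x" g] by simp

lemma pmf_entropy_map_pmf_inj:
  "finite (set_pmf p) \<Longrightarrow> b > 1 \<Longrightarrow> inj_on g (set_pmf p) \<Longrightarrow>
   pmf_entropy b (map_pmf g p) = pmf_entropy b p"
  using pmf_entropy_map_pmf_cong[of p b "\<lambda>x. x" g] by (simp add: inj_on_eq_iff)

lemma gibbs_inequality:
  fixes p q :: "'a \<Rightarrow> real"
  assumes S: "finite S" and pos: "\<And>t. t \<in> S \<Longrightarrow> 0 < p t" "\<And>t. t \<in> S \<Longrightarrow> 0 < q t"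
    and sp: "sum p S = 1" and sq: "sum q S \<le> 1" and b: "b > 1"
  shows "0 \<le> (\<Sum>t\<in>S. p t * log b (p t / q t))"
proof -
  have lb: "0 < ln b" using b by simp
  have "(\<Sum>t\<in>S. (p t - q t) / ln b) \<le> (\<Sum>t\<in>S. p t * log b (p t / q t))"
  proof (rule sum_mono)
    fix t assume t: "t \<in> S"
    have pt: "0 < p t" and qt: "0 < q t" using pos t by auto
    have "ln (q t / p t) \<le> q t / p t - 1" by (rule ln_le_minus_one) (use pt qt in simp)
    moreover have "ln (p t / q t) = - ln (q t / p t)" using pt qt by (simp add: ln_div)
    ultimately have "1 - q t / p t \<le> ln (p t / q t)" by simp
    then have "p t * (1 - q t / p t) \<le> p t * ln (p t / q t)" using pt by (simp add: mult_left_mono)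
    then have "p t - q t \<le> p t * ln (p t / q t)" using pt by (simp add: algebra_simps)
    then show "(p t - q t) / ln b \<le> p t * log b (p t / q t)"
      using lb by (simp add: log_def divide_right_mono)
  qed
  moreover have "(\<Sum>t\<in>S. (p t - q t) / ln b) = (sum p S - sum q S) / ln b"
    by (simp add: sum_divide_distrib[symmetric] sum_subtractf)
  moreover have "0 \<le> (sum p S - sum q S) / ln b" using sp sq lb by simp
  ultimately show ?thesis by linarith
qed

lemma pmf_entropy_le_log_card:
  assumes fin: "finite S" and sub: "set_pmf p \<subseteq> S" and b: "b > 1"
  shows "pmf_entropy b p \<le> log b (real (card S))"
proof -
  have fp: "finite (set_pmf p)" using finite_subset[OF sub fin] .
  have cS: "card S > 0" using sub fin set_pmf_not_empty by (metis card_gt_0_iff subset_empty)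
  have "0 \<le> (\<Sum>t\<in>set_pmf p. pmf p t * log b (pmf p t / (1 / real (card S))))"
  proof (rule gibbs_inequality[OF fp _ _ _ _ b])
    show "sum (pmf p) (set_pmf p) = 1" by (rule sum_pmf_eq_1) (use fp in auto)
    have "card (set_pmf p) \<le> card S" by (rule card_mono[OF fin sub])
    then show "(\<Sum>t\<in>set_pmf p. 1 / real (card S)) \<le> 1" using cS by (simp add: field_simps)
  qed (use cS in \<open>auto simp: pmf_positive\<close>)
  also have "\<dots> = (\<Sum>t\<in>set_pmf p. pmf p t * log b (pmf p t) + pmf p t * log b (real (card S)))"
    by (rule sum.cong) (use cS b in \<open>auto simp: log_mult pmf_positive distrib_left\<close>)
  also have "\<dots> = - pmf_entropy b p + log b (real (card S))"
    by (simp add: sum.distrib pmf_entropy_def expect_def sum_distrib_right[symmetric] sum_pmf_eq_1 fp)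
  finally show ?thesis by simp
qed

lemma sum_pmf_slice_eq_pmf_map_snd:
  assumes fin: "finite (set_pmf p)"
  shows "(\<Sum>a\<in>{a. (a, c) \<in> set_pmf p}. pmf p (a, c)) = pmf (map_pmf snd p) c"
proof -
  have "pmf (map_pmf snd p) c = measure p (snd -` {c} \<inter> set_pmf p)"
    by (simp add: pmf_map measure_Int_set_pmf)
  also have "\<dots> = sum (pmf p) (snd -` {c} \<inter> set_pmf p)"
    by (rule measure_measure_pmf_finite) (use fin in auto)
  also have "snd -` {c} \<inter> set_pmf p = (\<lambda>a. (a, c)) ` {a. (a, c) \<in> set_pmf p}" by auto
  also have "sum (pmf p) \<dots> = (\<Sum>a\<in>{a. (a, c) \<in> set_pmf p}. pmf p (a, c))"
    by (subst sum.reindex) (auto simp: inj_on_def)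
  finally show ?thesis by simp
qed

lemma finite_slice: "finite S \<Longrightarrow> finite {a. (a, c) \<in> S}"
  by (rule finite_subset[of _ "fst ` S"]) force+

lemma cond_mutual_info_eq_entropies:
  assumes fin: "finite (set_pmf J)"
  shows "cond_mutual_info b J A B C =
    pmf_entropy b (map_pmf (\<lambda>w. (A w, C w)) J) + pmf_entropy b (map_pmf (\<lambda>w. (B w, C w)) J)
    - pmf_entropy b (map_pmf (\<lambda>w. (A w, B w, C w)) J) - pmf_entropy b (map_pmf C J)"
proof -
  define pABC where "pABC = map_pmf (\<lambda>w. (A w, B w, C w)) J"
  define pAC where "pAC = map_pmf (\<lambda>w. (A w, C w)) J"
  define pBC where "pBC = map_pmf (\<lambda>w. (B w, C w)) J"
  define pC where "pC = map_pmf C J"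
  define F where "F = (\<lambda>(a, bb, c).
    log b ((pmf pABC (a, bb, c) * pmf pC c) / (pmf pAC (a, c) * pmf pBC (bb, c))))"
  have "cond_mutual_info b J A B C = expect pABC F"
    unfolding cond_mutual_info_def Let_def expect_def pABC_def[symmetric] pAC_def[symmetric]
      pBC_def[symmetric] pC_def[symmetric]
    by (rule sum.cong) (auto simp: F_def)
  also have "\<dots> = expect J (\<lambda>w. F (A w, B w, C w))"
    unfolding pABC_def by (simp add: expect_map_pmf fin)
  also have "\<dots> = expect J (\<lambda>w. log b (pmf pABC (A w, B w, C w)) + log b (pmf pC (C w))
       - log b (pmf pAC (A w, C w)) - log b (pmf pBC (B w, C w)))"
  proof (rule expect_cong)
    fix w assume w: "w \<in> set_pmf J"
    have "0 < pmf pABC (A w, B w, C w)" "0 < pmf pC (C w)"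
      "0 < pmf pAC (A w, C w)" "0 < pmf pBC (B w, C w)"
      unfolding pABC_def pC_def pAC_def pBC_def
      using pmf_map_pmf_pos[OF w, of "\<lambda>w. (A w, B w, C w)"] pmf_map_pmf_pos[OF w, of C]
        pmf_map_pmf_pos[OF w, of "\<lambda>w. (A w, C w)"] pmf_map_pmf_pos[OF w, of "\<lambda>w. (B w, C w)"]
      by simp_all
    then show "F (A w, B w, C w) = log b (pmf pABC (A w, B w, C w)) + log b (pmf pC (C w))
       - log b (pmf pAC (A w, C w)) - log b (pmf pBC (B w, C w))"
      by (simp add: F_def log_mult log_divide)
  qed
  also have "\<dots> = pmf_entropy b pAC + pmf_entropy b pBC - pmf_entropy b pABC - pmf_entropy b pC"
    unfolding pABC_def pAC_def pBC_def pC_def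
    by (simp add: expect_add expect_diff pmf_entropy_map_pmf[OF fin])
  finally show ?thesis unfolding pABC_def pAC_def pBC_def pC_def .
qed

lemma sum_cond_product_pmf_le_1:
  assumes fin: "finite (set_pmf J)"
  shows "(\<Sum>(a, bb, c)\<in>set_pmf (map_pmf (\<lambda>w. (A w, B w, C w)) J).
            pmf (map_pmf (\<lambda>w. (A w, C w)) J) (a, c) * pmf (map_pmf (\<lambda>w. (B w, C w)) J) (bb, c)
            / pmf (map_pmf C J) c) \<le> 1"
    (is "sum ?q ?S \<le> 1")
proof -
  define pAC where "pAC = map_pmf (\<lambda>w. (A w, C w)) J"
  define pBC where "pBC = map_pmf (\<lambda>w. (B w, C w)) J"
  define pC where "pC = map_pmf C J"
  have fAC: "finite (set_pmf pAC)" unfolding pAC_def using fin by simp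
  have fBC: "finite (set_pmf pBC)" unfolding pBC_def using fin by simp
  have fC: "finite (set_pmf pC)" unfolding pC_def using fin by simp
  have mAC: "(\<Sum>a\<in>{a. (a, c) \<in> set_pmf pAC}. pmf pAC (a, c)) = pmf pC c" for c
    using sum_pmf_slice_eq_pmf_map_snd[OF fAC, of c] unfolding pAC_def pC_def
    by (simp add: pmf.map_comp o_def)
  have mBC: "(\<Sum>a\<in>{a. (a, c) \<in> set_pmf pBC}. pmf pBC (a, c)) = pmf pC c" for c
    using sum_pmf_slice_eq_pmf_map_snd[OF fBC, of c] unfolding pBC_def pC_def
    by (simp add: pmf.map_comp o_def)
  define Sig where
    "Sig = (SIGMA c:set_pmf pC. {a. (a, c) \<in> set_pmf pAC} \<times> {bb. (bb, c) \<in> set_pmf pBC})"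
  define T where "T = (\<lambda>(c, a, bb). (a, bb, c)) ` Sig"
  have fSig: "finite Sig" unfolding Sig_def using fC fAC fBC by (auto intro!: finite_slice)
  have "?S \<subseteq> T"
  proof
    fix t assume "t \<in> ?S"
    then obtain a bb c where t: "t = (a, bb, c)" and "(c, a, bb) \<in> Sig"
      unfolding Sig_def pAC_def pBC_def pC_def by force
    then show "t \<in> T" unfolding T_def by force
  qed
  then have "sum ?q ?S \<le> sum ?q T"
    by (rule sum_mono2[rotated]) (auto simp: T_def fSig)
  also have "\<dots> = (\<Sum>(c, a, bb)\<in>Sig. pmf pAC (a, c) * pmf pBC (bb, c) / pmf pC c)"
    unfolding T_def pAC_def pBC_def pC_def by (subst sum.reindex) (auto simp: inj_on_def intro!: sum.cong)
  also have "\<dots> = (\<Sum>c\<in>set_pmf pC. (\<Sum>a\<in>{a. (a, c) \<in> set_pmf pAC}. pmf pAC (a, c)) *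
        (\<Sum>bb\<in>{bb. (bb, c) \<in> set_pmf pBC}. pmf pBC (bb, c)) / pmf pC c)"
    unfolding Sig_def
    by (subst sum.Sigma[symmetric]) (auto simp: fC finite_slice fAC fBC sum_product
        sum_divide_distrib sum.cartesian_product case_prod_unfold)
  also have "\<dots> = (\<Sum>c\<in>set_pmf pC. pmf pC c)"
    by (rule sum.cong) (auto simp: mAC mBC pmf_positive)
  also have "\<dots> = 1" by (rule sum_pmf_eq_1) (auto simp: fC)
  finally show ?thesis .
qed

text \<open>
  Gibbs' inequality comparing \<open>p(a,b,c)\<close> with \<open>p(a,c) p(b,c) / p(c)\<close>.
\<close>
lemma cond_mutual_info_nonneg:
  assumes fin: "finite (set_pmf J)" and b: "b > 1"
  shows "0 \<le> cond_mutual_info b J A B C"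
proof -
  define pABC where "pABC = map_pmf (\<lambda>w. (A w, B w, C w)) J"
  define pAC where "pAC = map_pmf (\<lambda>w. (A w, C w)) J"
  define pBC where "pBC = map_pmf (\<lambda>w. (B w, C w)) J"
  define pC where "pC = map_pmf C J"
  define q where "q = (\<lambda>(a, bb, c). pmf pAC (a, c) * pmf pBC (bb, c) / pmf pC c)"
  define S where "S = set_pmf pABC"
  have fS: "finite S" unfolding S_def pABC_def using fin by simp
  have pos: "0 < pmf pABC t \<and> 0 < q t" if "t \<in> S" for t
    using that unfolding q_def S_def pABC_def pAC_def pBC_def pC_def
    by (auto simp: pmf_positive split: prod.splits)
  have sq: "sum q S \<le> 1"
    using sum_cond_product_pmf_le_1[OF fin, where A=A and B=B and C=C]
    unfolding q_def S_def pABC_def pAC_def pBC_def pC_def .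
  have sp: "sum (pmf pABC) S = 1" unfolding S_def by (rule sum_pmf_eq_1) (use fS S_def in auto)
  have "0 \<le> (\<Sum>t\<in>S. pmf pABC t * log b (pmf pABC t / q t))"
    by (rule gibbs_inequality[OF fS _ _ sp sq b]) (use pos in auto)
  also have "\<dots> = cond_mutual_info b J A B C"
    unfolding cond_mutual_info_def Let_def pABC_def[symmetric] pAC_def[symmetric]
      pBC_def[symmetric] pC_def[symmetric] S_def
    by (rule sum.cong) (auto simp: q_def field_simps)
  finally show ?thesis .
qed

lemma pmf_entropy_submodular:
  assumes fin: "finite (set_pmf J)" and b: "b > 1"
  shows "pmf_entropy b (map_pmf (\<lambda>w. (A w, B w, C w)) J) + pmf_entropy b (map_pmf C J)
     \<le> pmf_entropy b (map_pmf (\<lambda>w. (A w, C w)) J) + pmf_entropy b (map_pmf (\<lambda>w. (B w, C w)) J)"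
  using cond_mutual_info_nonneg[OF fin b, of A B C] cond_mutual_info_eq_entropies[OF fin, of b A B C]
  by simp

lemma pmf_entropy_pair_le:
  assumes fin: "finite (set_pmf J)" and b: "b > 1"
  shows "pmf_entropy b (map_pmf (\<lambda>w. (A w, B w)) J)
     \<le> pmf_entropy b (map_pmf A J) + pmf_entropy b (map_pmf B J)"
proof -
  have "pmf_entropy b (map_pmf (\<lambda>w. (A w, B w, ())) J) + pmf_entropy b (map_pmf (\<lambda>w. ()) J)
     \<le> pmf_entropy b (map_pmf (\<lambda>w. (A w, ())) J) + pmf_entropy b (map_pmf (\<lambda>w. (B w, ())) J)"
    by (rule pmf_entropy_submodular[OF fin b])
  moreover have "pmf_entropy b (map_pmf (\<lambda>w. (A w, B w, ())) J) = pmf_entropy b (map_pmf (\<lambda>w. (A w, B w)) J)"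
    by (rule pmf_entropy_map_pmf_cong[OF fin b]) auto
  moreover have "pmf_entropy b (map_pmf (\<lambda>w. (A w, ())) J) = pmf_entropy b (map_pmf A J)"
    by (rule pmf_entropy_map_pmf_cong[OF fin b]) auto
  moreover have "pmf_entropy b (map_pmf (\<lambda>w. (B w, ())) J) = pmf_entropy b (map_pmf B J)"
    by (rule pmf_entropy_map_pmf_cong[OF fin b]) auto
  moreover have "pmf_entropy b (map_pmf (\<lambda>w. ()) J) = 0"
    by (simp add: map_pmf_const pmf_entropy_def)
  ultimately show ?thesis by simp
qed

lemma pmf_bind_pmf_Pair:
  "pmf (bind_pmf Q (\<lambda>x. map_pmf (Pair x) (R x))) (x, y) = pmf Q x * pmf (R x) y"
proof -
  have "pmf (bind_pmf Q (\<lambda>x. map_pmf (Pair x) (R x))) (x, y)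
      = (LINT x'|Q. indicator {x} x' * pmf (R x) y)"
    unfolding pmf_bind
  proof (rule Bochner_Integration.integral_cong[OF refl])
    fix x'
    show "pmf (map_pmf (Pair x') (R x')) (x, y) = indicator {x} x' * pmf (R x) y"
    proof (cases "x' = x")
      case True
      then show ?thesis using pmf_map_inj'[of "Pair x" "R x" y] by (simp add: inj_on_def)
    next
      case False
      then show ?thesis by (auto simp: pmf_eq_0_set_pmf)
    qed
  qed
  also have "\<dots> = pmf Q x * pmf (R x) y" by (simp add: measure_pmf_single)
  finally show ?thesis .
qed

lemma finite_set_bind_pmf_Pair:
  "finite (set_pmf Q) \<Longrightarrow> (\<And>x. x \<in> set_pmf Q \<Longrightarrow> finite (set_pmf (R x))) \<Longrightarrow>
   finite (set_pmf (bind_pmf Q (\<lambda>x. map_pmf (Pair x) (R x))))"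
  by (rule finite_set_bind_pmf) auto

lemma pmf_entropy_chain_rule:
  assumes fQ: "finite (set_pmf Q)" and fR: "\<And>x. x \<in> set_pmf Q \<Longrightarrow> finite (set_pmf (R x))"
    and b: "b > 1"
  shows "pmf_entropy b (bind_pmf Q (\<lambda>x. map_pmf (Pair x) (R x)))
       = pmf_entropy b Q + expect Q (\<lambda>x. pmf_entropy b (R x))"
proof -
  define Z where "Z = bind_pmf Q (\<lambda>x. map_pmf (Pair x) (R x))"
  have fR': "finite (set_pmf (map_pmf (Pair x) (R x)))" if "x \<in> set_pmf Q" for x
    using fR[OF that] by simp
  have "pmf_entropy b Z
      = - expect Z (\<lambda>w. log b (pmf Q (fst w)) + log b (pmf (R (fst w)) (snd w)))"
    unfolding pmf_entropy_def
  proof (rule arg_cong[where f=uminus], rule expect_cong)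
    fix w assume w: "w \<in> set_pmf Z"
    obtain x y where wxy: "w = (x, y)" and x: "x \<in> set_pmf Q" and y: "y \<in> set_pmf (R x)"
      using w unfolding Z_def by auto
    show "log b (pmf Z w) = log b (pmf Q (fst w)) + log b (pmf (R (fst w)) (snd w))"
      using x y pmf_positive[OF x] pmf_positive[OF y] unfolding wxy Z_def pmf_bind_pmf_Pair
      by (simp add: log_mult)
  qed
  also have "\<dots> = - expect Q (\<lambda>x. expect (map_pmf (Pair x) (R x))
                     (\<lambda>w. log b (pmf Q (fst w)) + log b (pmf (R (fst w)) (snd w))))"
    unfolding Z_def by (simp add: expect_bind_pmf[OF fQ fR'])
  also have "\<dots> = - expect Q (\<lambda>x. log b (pmf Q x) - pmf_entropy b (R x))"
    by (rule arg_cong[where f=uminus], rule expect_cong)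
      (simp add: expect_map_pmf fR expect_add expect_const pmf_entropy_def)
  also have "\<dots> = pmf_entropy b Q + expect Q (\<lambda>x. pmf_entropy b (R x))"
    by (simp add: expect_diff expect_add expect_uminus pmf_entropy_def)
  finally show ?thesis unfolding Z_def .
qed

lemma pmf_entropy_pair_pmf:
  assumes "finite (set_pmf p)" "finite (set_pmf q)" "b > 1"
  shows "pmf_entropy b (pair_pmf p q) = pmf_entropy b p + pmf_entropy b q"
proof -
  have "pair_pmf p q = bind_pmf p (\<lambda>x. map_pmf (Pair x) q)"
    unfolding pair_pmf_def map_pmf_def by simp
  then show ?thesis using assms by (simp add: pmf_entropy_chain_rule expect_const)
qed

lemma map_pmf_fst_bind_pmf_Pair: "map_pmf fst (bind_pmf Q (\<lambda>x. map_pmf (Pair x) (R x))) = Q"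
  by (simp add: map_bind_pmf map_pmf_comp bind_return_pmf')

lemma map_pmf_snd_bind_pmf_Pair:
  "map_pmf (\<lambda>w. g (snd w)) (bind_pmf Q (\<lambda>x. map_pmf (Pair x) (R x)))
   = bind_pmf Q (\<lambda>x. map_pmf g (R x))"
  by (simp add: map_bind_pmf map_pmf_comp)

lemma map_pmf_apsnd_bind_pmf_Pair:
  "map_pmf (\<lambda>w. (fst w, g (snd w))) (bind_pmf Q (\<lambda>x. map_pmf (Pair x) (R x)))
   = bind_pmf Q (\<lambda>x. map_pmf (Pair x) (map_pmf g (R x)))"
  by (simp add: map_bind_pmf map_pmf_comp)

lemma pair_bind_pmf_left: "pair_pmf (bind_pmf M f) N = bind_pmf M (\<lambda>k. pair_pmf (f k) N)"
  unfolding pair_pmf_def by (simp add: bind_assoc_pmf)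

lemma pair_bind_pmf_right: "pair_pmf N (bind_pmf M f) = bind_pmf M (\<lambda>k. pair_pmf N (f k))"
  unfolding pair_pmf_def by (simp add: bind_assoc_pmf bind_commute_pmf[of N])

lemma bind_pair_pmf_pair_pmf:
  "bind_pmf (pair_pmf Q R) (\<lambda>(a, b). pair_pmf (F a) (G b)) = pair_pmf (bind_pmf Q F) (bind_pmf R G)"
  unfolding pair_pmf_def bind_assoc_pmf bind_return_pmf
  by (rule bind_pmf_cong[OF refl], simp, rule bind_commute_pmf)

lemma pmf_entropy_bind_pmf_pair_le:
  assumes fQ: "finite (set_pmf Q)" and fF: "\<And>x. finite (set_pmf (F x))"
    and fG: "\<And>x. finite (set_pmf (G x))" and b: "b > 1"
  shows "pmf_entropy b (bind_pmf Q (\<lambda>x. pair_pmf (F x) (G x)))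
       \<le> pmf_entropy b (bind_pmf Q F) + pmf_entropy b (bind_pmf Q G)"
proof -
  let ?J = "bind_pmf Q (\<lambda>x. pair_pmf (F x) (G x))"
  have fJ: "finite (set_pmf ?J)" by (rule finite_set_bind_pmf[OF fQ]) (simp add: fF fG)
  have "pmf_entropy b ?J = pmf_entropy b (map_pmf (\<lambda>w. (fst w, snd w)) ?J)" by simp
  also have "\<dots> \<le> pmf_entropy b (map_pmf fst ?J) + pmf_entropy b (map_pmf snd ?J)"
    by (rule pmf_entropy_pair_le[OF fJ b])
  finally show ?thesis by (simp add: map_bind_pmf map_fst_pair_pmf map_snd_pair_pmf)
qed

text \<open>
  The concatenation together with the length of the first block determines both blocks.
\<close>
lemma pmf_entropy_pair_pmf_le_append:
  fixes Y1 Y2 :: "'a list pmf"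
  assumes fY1: "finite (set_pmf Y1)" and fY2: "finite (set_pmf Y2)" and b: "b > 1"
    and len: "\<And>y. y \<in> set_pmf Y1 \<Longrightarrow> length y \<le> n"
  shows "pmf_entropy b Y1 + pmf_entropy b Y2
       \<le> pmf_entropy b (map_pmf (\<lambda>(u, v). u @ v) (pair_pmf Y1 Y2)) + log b (real n + 1)"
proof -
  let ?Y = "pair_pmf Y1 Y2" and ?app = "\<lambda>(u, v). u @ v :: 'a list"
  have fY: "finite (set_pmf ?Y)" using fY1 fY2 by simp
  have inj: "inj_on (\<lambda>w. (?app w, length (fst w))) (set_pmf ?Y)"
    by (rule inj_onI) (auto simp: append_eq_append_conv)
  have len_Y: "set_pmf (map_pmf (\<lambda>w. length (fst w)) ?Y) \<subseteq> {0..n}"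
    using len by auto
  have "pmf_entropy b Y1 + pmf_entropy b Y2 = pmf_entropy b ?Y"
    by (simp add: pmf_entropy_pair_pmf fY1 fY2 b)
  also have "\<dots> = pmf_entropy b (map_pmf (\<lambda>w. (?app w, length (fst w))) ?Y)"
    by (rule pmf_entropy_map_pmf_inj[OF fY b inj, symmetric])
  also have "\<dots> \<le> pmf_entropy b (map_pmf ?app ?Y) + pmf_entropy b (map_pmf (\<lambda>w. length (fst w)) ?Y)"
    by (rule pmf_entropy_pair_le[OF fY b])
  also have "pmf_entropy b (map_pmf (\<lambda>w. length (fst w)) ?Y) \<le> log b (real (card {0..n}))"
    by (rule pmf_entropy_le_log_card[OF _ len_Y b]) simp
  finally show ?thesis by (simp add: add.commute)
qed

lemma bind_pmf_cond_pmf_map_pmf: "bind_pmf (map_pmf f Q) (\<lambda>n. cond_pmf Q {z. f z = n}) = Q"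
proof (rule bind_cond_pmf_cancel)
  fix n assume "n \<in> set_pmf (map_pmf f Q)"
  then show "set_pmf Q \<inter> {z. f z = n} \<noteq> {}" by auto
next
  fix z assume "z \<in> set_pmf Q"
  then show "set_pmf (map_pmf f Q) \<inter> {n. f z = n} \<noteq> {}" by auto
next
  fix n z assume "f z = n"
  then show "measure_pmf.prob Q {z. f z = n} = measure_pmf.prob (map_pmf f Q) {n'. f z = n'}"
    by (simp add: measure_pmf_single[symmetric] pmf_map vimage_def)
qed

section \<open>The deletion channel\<close>

definition cons_if :: "bool \<Rightarrow> 'a \<Rightarrow> 'a list \<Rightarrow> 'a list" where
  "cons_if keep x ys = (if keep then x # ys else ys)"

lemma del_chan_Cons:
  "del_chan d (x # xs) = bind_pmf (bernoulli_pmf (1 - d)) (\<lambda>k. map_pmf (cons_if k x) (del_chan d xs))"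
  by (simp add: map_pmf_def cons_if_def)

declare del_chan.simps(2)[simp del]

lemma map_cons_if: "map g (cons_if k x y) = cons_if k (g x) (map g y)"
  by (simp add: cons_if_def)

lemma filter_cons_if:
  "filter P (cons_if k x y) = (if P x then cons_if k x (filter P y) else filter P y)"
  by (simp add: cons_if_def)

lemma cons_if_append: "cons_if k x a @ b = cons_if k x (a @ b)"
  by (simp add: cons_if_def)

lemma set_pmf_del_chan_Cons:
  "set_pmf (del_chan d (x # xs)) \<subseteq> Cons x ` set_pmf (del_chan d xs) \<union> set_pmf (del_chan d xs)"
proof
  fix z assume "z \<in> set_pmf (del_chan d (x # xs))"
  then obtain k y where "y \<in> set_pmf (del_chan d xs)" "z = cons_if k x y"
    unfolding del_chan_Cons set_bind_pmf set_map_pmf by blast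
  then show "z \<in> Cons x ` set_pmf (del_chan d xs) \<union> set_pmf (del_chan d xs)"
    unfolding cons_if_def by (cases k) auto
qed

lemma finite_set_pmf_del_chan: "finite (set_pmf (del_chan d xs))"
proof (induction xs)
  case (Cons x xs)
  show ?case by (rule finite_subset[OF set_pmf_del_chan_Cons]) (use Cons.IH in simp)
qed simp

lemma length_set_del_chan:
  "y \<in> set_pmf (del_chan d xs) \<Longrightarrow> length y \<le> length xs \<and> set y \<subseteq> set xs"
proof (induction xs arbitrary: y)
  case (Cons x xs)
  have "y \<in> Cons x ` set_pmf (del_chan d xs) \<union> set_pmf (del_chan d xs)"
    using set_pmf_del_chan_Cons Cons.prems by (rule subsetD)
  then show ?case
  proof
    assume "y \<in> Cons x ` set_pmf (del_chan d xs)"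
    then obtain y' where y': "y = x # y'" "y' \<in> set_pmf (del_chan d xs)" by blast
    show ?thesis using Cons.IH[OF y'(2)] unfolding y' by auto
  next
    assume "y \<in> set_pmf (del_chan d xs)"
    from Cons.IH[OF this] show ?thesis by auto
  qed
qed simp

lemma map_pmf_map_del_chan: "map_pmf (map g) (del_chan d xs) = del_chan d (map g xs)"
proof (induction xs)
  case (Cons x xs)
  have "map_pmf (map g) (del_chan d (x # xs))
      = bind_pmf (bernoulli_pmf (1 - d)) (\<lambda>k. map_pmf (\<lambda>y. cons_if k (g x) (map g y)) (del_chan d xs))"
    by (simp add: del_chan_Cons map_bind_pmf map_pmf_comp map_cons_if)
  also have "\<dots> = bind_pmf (bernoulli_pmf (1 - d))
                    (\<lambda>k. map_pmf (cons_if k (g x)) (map_pmf (map g) (del_chan d xs)))"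
    by (simp add: map_pmf_comp)
  also have "\<dots> = del_chan d (map g (x # xs))" by (simp add: Cons del_chan_Cons)
  finally show ?case .
qed simp

lemma map_pmf_filter_del_chan: "map_pmf (filter P) (del_chan d xs) = del_chan d (filter P xs)"
proof (induction xs)
  case (Cons x xs)
  show ?case
  proof (cases "P x")
    case True
    then have "map_pmf (filter P) (del_chan d (x # xs))
        = bind_pmf (bernoulli_pmf (1 - d)) (\<lambda>k. map_pmf (cons_if k x) (map_pmf (filter P) (del_chan d xs)))"
      by (simp add: del_chan_Cons map_bind_pmf map_pmf_comp filter_cons_if)
    also have "\<dots> = del_chan d (filter P (x # xs))" using True by (simp add: Cons del_chan_Cons)
    finally show ?thesis .
  next
    case False
    then have "map_pmf (filter P) (del_chan d (x # xs))
        = bind_pmf (bernoulli_pmf (1 - d)) (\<lambda>k. map_pmf (filter P) (del_chan d xs))"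
      by (simp add: del_chan_Cons map_bind_pmf map_pmf_comp filter_cons_if)
    also have "\<dots> = del_chan d (filter P (x # xs))" using False by (simp add: Cons)
    finally show ?thesis .
  qed
qed simp

lemma del_chan_append:
  "del_chan d (xs @ ys) = map_pmf (\<lambda>(a, b). a @ b) (pair_pmf (del_chan d xs) (del_chan d ys))"
proof (induction xs)
  case Nil
  show ?case unfolding append.simps del_chan.simps(1) pair_return_pmf1 map_pmf_comp by simp
next
  case (Cons x xs)
  have "del_chan d ((x # xs) @ ys)
     = bind_pmf (bernoulli_pmf (1 - d)) (\<lambda>k. map_pmf (cons_if k x)
         (map_pmf (\<lambda>(a, b). a @ b) (pair_pmf (del_chan d xs) (del_chan d ys))))"
    by (simp add: del_chan_Cons Cons)
  also have "\<dots> = bind_pmf (bernoulli_pmf (1 - d)) (\<lambda>k. map_pmf (\<lambda>(a, b). a @ b)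
                  (map_pmf (apfst (cons_if k x)) (pair_pmf (del_chan d xs) (del_chan d ys))))"
    by (simp add: map_pmf_comp case_prod_unfold cons_if_append)
  also have "\<dots> = map_pmf (\<lambda>(a, b). a @ b) (pair_pmf (del_chan d (x # xs)) (del_chan d ys))"
    by (simp add: del_chan_Cons pair_bind_pmf_left pair_map_pmf1 map_bind_pmf)
  finally show ?case .
qed

lemma map_pmf_filter_pair_del_chan:
  assumes disj: "\<And>s. \<not> (P1 s \<and> P2 s)"
  shows "map_pmf (\<lambda>y. (filter P1 y, filter P2 y)) (del_chan d xs)
       = pair_pmf (del_chan d (filter P1 xs)) (del_chan d (filter P2 xs))"
proof (induction xs)
  case (Cons x xs)
  let ?F = "\<lambda>y. (filter P1 y, filter P2 y)"
  consider "P1 x" "\<not> P2 x" | "\<not> P1 x" "P2 x" | "\<not> P1 x" "\<not> P2 x" using disj by blast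
  then show ?case
  proof cases
    case 1
    then have "map_pmf ?F (del_chan d (x # xs))
        = bind_pmf (bernoulli_pmf (1 - d)) (\<lambda>k. map_pmf (apfst (cons_if k x)) (map_pmf ?F (del_chan d xs)))"
      by (simp add: del_chan_Cons map_bind_pmf map_pmf_comp filter_cons_if)
    also have "\<dots> = pair_pmf (del_chan d (filter P1 (x # xs))) (del_chan d (filter P2 (x # xs)))"
      using 1 by (simp add: Cons del_chan_Cons pair_bind_pmf_left pair_map_pmf1)
    finally show ?thesis .
  next
    case 2
    then have "map_pmf ?F (del_chan d (x # xs))
        = bind_pmf (bernoulli_pmf (1 - d)) (\<lambda>k. map_pmf (apsnd (cons_if k x)) (map_pmf ?F (del_chan d xs)))"
      by (simp add: del_chan_Cons map_bind_pmf map_pmf_comp filter_cons_if)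
    also have "\<dots> = pair_pmf (del_chan d (filter P1 (x # xs))) (del_chan d (filter P2 (x # xs)))"
      using 2 by (simp add: Cons del_chan_Cons pair_bind_pmf_right pair_map_pmf2)
    finally show ?thesis .
  next
    case 3
    then have "map_pmf ?F (del_chan d (x # xs))
        = bind_pmf (bernoulli_pmf (1 - d)) (\<lambda>k. map_pmf ?F (del_chan d xs))"
      by (simp add: del_chan_Cons map_bind_pmf map_pmf_comp filter_cons_if)
    also have "\<dots> = pair_pmf (del_chan d (filter P1 (x # xs))) (del_chan d (filter P2 (x # xs)))"
      using 3 by (simp add: Cons)
    finally show ?thesis .
  qed
qed simp

lemma chan_joint_eq_bind_pmf:
  "chan_joint d Q = bind_pmf Q (\<lambda>x. map_pmf (Pair x) (del_chan d x))"
  unfolding chan_joint_def by simp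

section \<open>Information carried by the deletion channel\<close>

definition del_info :: "real \<Rightarrow> real \<Rightarrow> 'a list pmf \<Rightarrow> real" where
  "del_info b d Q = pmf_entropy b (bind_pmf Q (del_chan d)) - expect Q (\<lambda>x. pmf_entropy b (del_chan d x))"

lemma pmf_entropy_chan_joint:
  "finite (set_pmf Q) \<Longrightarrow> b > 1 \<Longrightarrow>
   pmf_entropy b (chan_joint d Q) = pmf_entropy b Q + expect Q (\<lambda>x. pmf_entropy b (del_chan d x))"
  unfolding chan_joint_eq_bind_pmf by (rule pmf_entropy_chain_rule[OF _ finite_set_pmf_del_chan])

lemma mutual_info_chan_joint:
  assumes fQ: "finite (set_pmf Q)" and b: "b > 1"
  shows "mutual_info b (chan_joint d Q) fst snd = del_info b d Q"
proof -
  define J where "J = chan_joint d Q"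
  have fJ: "finite (set_pmf J)" unfolding J_def chan_joint_eq_bind_pmf
    by (rule finite_set_bind_pmf_Pair[OF fQ finite_set_pmf_del_chan])
  have "mutual_info b J fst snd
      = pmf_entropy b (map_pmf (\<lambda>w. (fst w, ())) J) + pmf_entropy b (map_pmf (\<lambda>w. (snd w, ())) J)
        - pmf_entropy b (map_pmf (\<lambda>w. (fst w, snd w, ())) J) - pmf_entropy b (map_pmf (\<lambda>w. ()) J)"
    unfolding mutual_info_def by (rule cond_mutual_info_eq_entropies[OF fJ])
  also have "pmf_entropy b (map_pmf (\<lambda>w. (fst w, ())) J) = pmf_entropy b (map_pmf fst J)"
    by (rule pmf_entropy_map_pmf_cong[OF fJ b]) auto
  also have "map_pmf fst J = Q"
    unfolding J_def chan_joint_eq_bind_pmf by (rule map_pmf_fst_bind_pmf_Pair)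
  also have "pmf_entropy b (map_pmf (\<lambda>w. (snd w, ())) J) = pmf_entropy b (map_pmf snd J)"
    by (rule pmf_entropy_map_pmf_cong[OF fJ b]) auto
  also have "map_pmf snd J = bind_pmf Q (del_chan d)"
    unfolding J_def chan_joint_eq_bind_pmf
    using map_pmf_snd_bind_pmf_Pair[of "\<lambda>y. y" Q "del_chan d"] by simp
  also have "pmf_entropy b (map_pmf (\<lambda>w. (fst w, snd w, ())) J) = pmf_entropy b (map_pmf (\<lambda>w. w) J)"
    by (rule pmf_entropy_map_pmf_cong[OF fJ b]) auto
  also have "pmf_entropy b (map_pmf (\<lambda>w. ()) J) = 0"
    by (simp add: pmf_entropy_def)
  finally show ?thesis
    unfolding J_def del_info_def using pmf_entropy_chan_joint[OF fQ b, of d] by simp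
qed

lemma del_info_nonneg: "finite (set_pmf Q) \<Longrightarrow> b > 1 \<Longrightarrow> 0 \<le> del_info b d Q"
  using mutual_info_chan_joint[of Q b d] cond_mutual_info_nonneg[of "chan_joint d Q" b fst snd "\<lambda>_. ()"]
  unfolding mutual_info_def chan_joint_eq_bind_pmf
  by (simp add: finite_set_bind_pmf_Pair finite_set_pmf_del_chan)

lemma del_info_le_pmf_entropy:
  assumes fQ: "finite (set_pmf Q)" and b: "b > 1"
  shows "del_info b d Q \<le> pmf_entropy b Q"
proof -
  define J where "J = chan_joint d Q"
  have fJ: "finite (set_pmf J)" unfolding J_def chan_joint_eq_bind_pmf
    by (rule finite_set_bind_pmf_Pair[OF fQ finite_set_pmf_del_chan])
  have "pmf_entropy b (bind_pmf Q (del_chan d)) = pmf_entropy b (map_pmf snd J)"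
    unfolding J_def chan_joint_eq_bind_pmf
    using map_pmf_snd_bind_pmf_Pair[of "\<lambda>y. y" Q "del_chan d"] by simp
  also have "\<dots> \<le> pmf_entropy b J" by (rule pmf_entropy_map_pmf_le[OF fJ b])
  finally show ?thesis unfolding del_info_def J_def pmf_entropy_chan_joint[OF fQ b] by simp
qed

lemma del_info_return_pmf_Nil [simp]: "del_info b d (return_pmf []) = 0"
  by (simp add: del_info_def bind_return_pmf)

lemma del_info_map_inj:
  assumes fQ: "finite (set_pmf Q)" and b: "b > 1" and inj: "inj_on g S"
    and sub: "\<And>x. x \<in> set_pmf Q \<Longrightarrow> set x \<subseteq> S"
  shows "del_info b d (map_pmf (map g) Q) = del_info b d Q"
proof -
  have injl: "inj_on (map g) {y. set y \<subseteq> S}"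
    by (rule inj_on_mapI, rule inj_on_subset[OF inj]) auto
  have entropy_eq: "pmf_entropy b (map_pmf (map g) R) = pmf_entropy b R"
    if "finite (set_pmf R)" "\<And>y. y \<in> set_pmf R \<Longrightarrow> set y \<subseteq> S" for R
    by (rule pmf_entropy_map_pmf_inj[OF that(1) b inj_on_subset[OF injl]]) (use that(2) in blast)
  have "pmf_entropy b (bind_pmf (map_pmf (map g) Q) (del_chan d)) = pmf_entropy b (bind_pmf Q (del_chan d))"
    unfolding bind_map_pmf map_pmf_map_del_chan[symmetric] map_bind_pmf[symmetric]
    by (rule entropy_eq) (use fQ sub length_set_del_chan in
        \<open>fastforce intro: finite_set_bind_pmf finite_set_pmf_del_chan\<close>)+
  moreover have "expect (map_pmf (map g) Q) (\<lambda>x. pmf_entropy b (del_chan d x))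
      = expect Q (\<lambda>x. pmf_entropy b (del_chan d x))"
    unfolding expect_map_pmf[OF fQ] map_pmf_map_del_chan[symmetric]
    by (rule expect_cong, rule entropy_eq[OF finite_set_pmf_del_chan])
      (use sub length_set_del_chan in blast)
  ultimately show ?thesis unfolding del_info_def by simp
qed

lemma pmf_entropy_del_chan_append_le:
  "b > 1 \<Longrightarrow> pmf_entropy b (del_chan d (xs @ ys)) \<le> pmf_entropy b (del_chan d xs) + pmf_entropy b (del_chan d ys)"
  unfolding del_chan_append
  by (subst pmf_entropy_pair_pmf[symmetric]) (auto intro: pmf_entropy_map_pmf_le simp: finite_set_pmf_del_chan)

text \<open>
  Submodularity applied to the input \<open>X\<close> and the pair \<open>W\<close> of outputs of the two halves,
  whose concatenation is the output \<open>Y\<close>: \<open>H(X,W) + H(Y) \<le> H(X,Y) + H(W)\<close>.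
\<close>
lemma del_info_take_drop_le:
  fixes Q :: "'a list pmf"
  assumes fQ: "finite (set_pmf Q)" and b: "b > 1"
  shows "del_info b d Q \<le> del_info b d (map_pmf (take m) Q) + del_info b d (map_pmf (drop m) Q)"
proof -
  define R :: "'a list \<Rightarrow> ('a list \<times> 'a list) pmf"
    where "R = (\<lambda>x. pair_pmf (del_chan d (take m x)) (del_chan d (drop m x)))"
  define app :: "'a list \<times> 'a list \<Rightarrow> 'a list" where "app = (\<lambda>(a, b). a @ b)"
  have delR: "del_chan d x = map_pmf app (R x)" for x
    using del_chan_append[of d "take m x" "drop m x"] unfolding R_def app_def by simp
  have fR: "finite (set_pmf (R x))" for x unfolding R_def by (simp add: finite_set_pmf_del_chan)
  define J where "J = bind_pmf Q (\<lambda>x. map_pmf (Pair x) (R x))"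
  have fJ: "finite (set_pmf J)" unfolding J_def by (rule finite_set_bind_pmf_Pair[OF fQ fR])
  have "pmf_entropy b (map_pmf (\<lambda>w. (fst w, snd w, app (snd w))) J) + pmf_entropy b (map_pmf (\<lambda>w. app (snd w)) J)
     \<le> pmf_entropy b (map_pmf (\<lambda>w. (fst w, app (snd w))) J) + pmf_entropy b (map_pmf (\<lambda>w. (snd w, app (snd w))) J)"
    by (rule pmf_entropy_submodular[OF fJ b])
  also have "pmf_entropy b (map_pmf (\<lambda>w. (fst w, snd w, app (snd w))) J) = pmf_entropy b (map_pmf (\<lambda>w. w) J)"
    by (rule pmf_entropy_map_pmf_cong[OF fJ b]) auto
  also have "pmf_entropy b (map_pmf (\<lambda>w. (snd w, app (snd w))) J) = pmf_entropy b (map_pmf snd J)"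
    by (rule pmf_entropy_map_pmf_cong[OF fJ b]) auto
  also have "map_pmf snd J = bind_pmf Q (\<lambda>x. pair_pmf (del_chan d (take m x)) (del_chan d (drop m x)))"
    unfolding J_def R_def using map_pmf_snd_bind_pmf_Pair[of "\<lambda>y. y" Q] by simp
  also have "map_pmf (\<lambda>w. app (snd w)) J = bind_pmf Q (del_chan d)"
    unfolding J_def map_pmf_snd_bind_pmf_Pair delR ..
  also have "map_pmf (\<lambda>w. (fst w, app (snd w))) J = chan_joint d Q"
    unfolding J_def map_pmf_apsnd_bind_pmf_Pair delR[symmetric] chan_joint_eq_bind_pmf ..
  finally have "pmf_entropy b (map_pmf (\<lambda>w. w) J) + pmf_entropy b (bind_pmf Q (del_chan d))
      \<le> pmf_entropy b (chan_joint d Q)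
        + pmf_entropy b (bind_pmf Q (\<lambda>x. pair_pmf (del_chan d (take m x)) (del_chan d (drop m x))))" .
  moreover have "pmf_entropy b (map_pmf (\<lambda>w. w) J)
      = pmf_entropy b Q + expect Q (\<lambda>x. pmf_entropy b (del_chan d (take m x)))
        + expect Q (\<lambda>x. pmf_entropy b (del_chan d (drop m x)))"
    unfolding J_def R_def using fQ b
    by (simp add: pmf_entropy_chain_rule pmf_entropy_pair_pmf finite_set_pmf_del_chan expect_add)
  moreover have "pmf_entropy b (bind_pmf Q (\<lambda>x. pair_pmf (del_chan d (take m x)) (del_chan d (drop m x))))
      \<le> pmf_entropy b (bind_pmf (map_pmf (take m) Q) (del_chan d))
        + pmf_entropy b (bind_pmf (map_pmf (drop m) Q) (del_chan d))"
    unfolding bind_map_pmf by (rule pmf_entropy_bind_pmf_pair_le[OF fQ _ _ b]) (simp_all add: finite_set_pmf_del_chan)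
  ultimately show ?thesis
    unfolding del_info_def pmf_entropy_chan_joint[OF fQ b] by (simp add: expect_map_pmf fQ)
qed

lemma del_info_append_ge:
  fixes Q R :: "'a list pmf"
  assumes fQ: "finite (set_pmf Q)" and fR: "finite (set_pmf R)" and b: "b > 1"
    and len: "\<And>x. x \<in> set_pmf Q \<Longrightarrow> length x \<le> n"
  shows "del_info b d Q + del_info b d R - log b (real n + 1)
       \<le> del_info b d (map_pmf (\<lambda>(a, b). a @ b) (pair_pmf Q R))"
proof -
  define app :: "'a list \<times> 'a list \<Rightarrow> 'a list" where "app = (\<lambda>(a, b). a @ b)"
  define H :: "'a list \<Rightarrow> real" where "H = (\<lambda>x. pmf_entropy b (del_chan d x))"
  have fQR: "finite (set_pmf (pair_pmf Q R))" using fQ fR by simp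
  have "bind_pmf (map_pmf app (pair_pmf Q R)) (del_chan d)
      = map_pmf app (bind_pmf (pair_pmf Q R) (\<lambda>(a, b). pair_pmf (del_chan d a) (del_chan d b)))"
    unfolding bind_map_pmf map_bind_pmf app_def by (simp add: del_chan_append case_prod_unfold)
  also have "\<dots> = map_pmf app (pair_pmf (bind_pmf Q (del_chan d)) (bind_pmf R (del_chan d)))"
    unfolding bind_pair_pmf_pair_pmf ..
  finally have output_eq: "bind_pmf (map_pmf app (pair_pmf Q R)) (del_chan d)
      = map_pmf app (pair_pmf (bind_pmf Q (del_chan d)) (bind_pmf R (del_chan d)))" .
  have "pmf_entropy b (bind_pmf Q (del_chan d)) + pmf_entropy b (bind_pmf R (del_chan d))
      \<le> pmf_entropy b (bind_pmf (map_pmf app (pair_pmf Q R)) (del_chan d)) + log b (real n + 1)"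
    unfolding output_eq unfolding app_def
    by (rule pmf_entropy_pair_pmf_le_append[OF finite_set_bind_pmf[OF fQ finite_set_pmf_del_chan]
          finite_set_bind_pmf[OF fR finite_set_pmf_del_chan] b])
      (use len length_set_del_chan in fastforce)
  moreover have "expect (map_pmf app (pair_pmf Q R)) H \<le> expect (pair_pmf Q R) (\<lambda>w. H (fst w) + H (snd w))"
    unfolding expect_map_pmf[OF fQR] H_def app_def
    by (rule expect_mono) (auto intro: pmf_entropy_del_chan_append_le[OF b])
  moreover have "expect (pair_pmf Q R) (\<lambda>w. H (fst w) + H (snd w)) = expect Q H + expect R H"
    using expect_map_pmf[OF fQR, of fst H] expect_map_pmf[OF fQR, of snd H]
    by (simp add: expect_add map_fst_pair_pmf map_snd_pair_pmf)
  ultimately show ?thesis unfolding del_info_def H_def app_def by linarith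
qed

lemma del_info_le_cond:
  fixes Q :: "'a list pmf" and f :: "'a list \<Rightarrow> 'c"
  assumes fQ: "finite (set_pmf Q)" and b: "b > 1"
  shows "del_info b d Q
     \<le> pmf_entropy b (map_pmf f Q) + expect (map_pmf f Q) (\<lambda>n. del_info b d (cond_pmf Q {z. f z = n}))"
proof -
  define pN where "pN = map_pmf f Q"
  define Qn where "Qn = (\<lambda>n. cond_pmf Q {z. f z = n})"
  have fN: "finite (set_pmf pN)" unfolding pN_def using fQ by simp
  have fQn: "finite (set_pmf (Qn n))" if "n \<in> set_pmf pN" for n
  proof -
    have "set_pmf (Qn n) = set_pmf Q \<inter> {z. f z = n}"
      unfolding Qn_def by (rule set_cond_pmf) (use that in \<open>auto simp: pN_def\<close>)
    then show ?thesis using fQ by simp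
  qed
  have Qeq: "Q = bind_pmf pN Qn"
    unfolding pN_def Qn_def by (rule bind_pmf_cond_pmf_map_pmf[symmetric])
  have fB: "finite (set_pmf (bind_pmf (Qn n) (del_chan d)))" if "n \<in> set_pmf pN" for n
    by (rule finite_set_bind_pmf[OF fQn[OF that] finite_set_pmf_del_chan])
  have "pmf_entropy b (bind_pmf Q (del_chan d))
      = pmf_entropy b (map_pmf snd (bind_pmf pN (\<lambda>n. map_pmf (Pair n) (bind_pmf (Qn n) (del_chan d)))))"
    using map_pmf_snd_bind_pmf_Pair[of "\<lambda>y. y" pN "\<lambda>n. bind_pmf (Qn n) (del_chan d)"]
    by (simp add: Qeq bind_assoc_pmf)
  also have "\<dots> \<le> pmf_entropy b (bind_pmf pN (\<lambda>n. map_pmf (Pair n) (bind_pmf (Qn n) (del_chan d))))"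
    by (rule pmf_entropy_map_pmf_le[OF finite_set_bind_pmf_Pair[OF fN fB] b])
  also have "\<dots> = pmf_entropy b pN + expect pN (\<lambda>n. pmf_entropy b (bind_pmf (Qn n) (del_chan d)))"
    by (rule pmf_entropy_chain_rule[OF fN fB b])
  moreover have "expect Q (\<lambda>x. pmf_entropy b (del_chan d x))
      = expect pN (\<lambda>n. expect (Qn n) (\<lambda>x. pmf_entropy b (del_chan d x)))"
    unfolding Qeq by (rule expect_bind_pmf[OF fN fQn])
  ultimately show ?thesis unfolding del_info_def Qn_def pN_def by (simp add: expect_diff)
qed

section \<open>The capacity of the binary deletion channel\<close>

lemma subadditive_div_le:
  fixes a :: "nat \<Rightarrow> real"
  assumes sub: "\<And>m n. a (m + n) \<le> a m + a n" and nn: "\<And>n. 0 \<le> a n"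
    and m: "m \<ge> 1" and n: "n \<ge> 1"
  shows "a n / real n \<le> a m / real m + (\<Sum>r<m. a r) / real n"
proof -
  have iter: "a (q * m + r) \<le> real q * a m + a r" for q r
  proof (induction q)
    case (Suc q)
    have "a (Suc q * m + r) = a (m + (q * m + r))" by (simp add: algebra_simps)
    also have "\<dots> \<le> a m + a (q * m + r)" by (rule sub)
    finally show ?case using Suc by (simp add: algebra_simps)
  qed simp
  have "a (n mod m) \<le> (\<Sum>r<m. a r)"
    by (rule member_le_sum) (use m nn in auto)
  then have "a n \<le> real (n div m) * a m + (\<Sum>r<m. a r)"
    using iter[of "n div m" "n mod m"] by simp
  moreover have "real (n div m) * real m \<le> real n"
    by (metis div_times_less_eq_dividend of_nat_le_iff of_nat_mult)
  then have "real (n div m) * real m * a m \<le> real n * a m"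
    by (rule mult_right_mono) (rule nn)
  then have "real (n div m) * a m / real n \<le> a m / real m"
    using m n by (simp add: field_simps mult_ac)
  ultimately show ?thesis using n by (simp add: field_simps)
qed

lemma fekete_subadditive:
  fixes a :: "nat \<Rightarrow> real"
  assumes sub: "\<And>m n. a (m + n) \<le> a m + a n" and nn: "\<And>n. 0 \<le> a n"
  shows "(\<lambda>n. a n / real n) \<longlonglongrightarrow> (INF n\<in>{1..}. a n / real n)"
proof -
  define L where "L = (INF n\<in>{1..}. a n / real n)"
  have bdd: "bdd_below ((\<lambda>n. a n / real n) ` {1..})"
    by (rule bdd_belowI[of _ 0]) (use nn in auto)
  show ?thesis unfolding L_def[symmetric]
  proof (rule LIMSEQ_I)
    fix e :: real assume e: "0 < e"
    then obtain m where m: "m \<ge> 1" and am: "a m / real m < L + e / 2"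
      using cINF_less_iff[OF _ bdd, of "L + e / 2"] unfolding L_def[symmetric] by auto
    define M where "M = (\<Sum>r<m. a r)"
    show "\<exists>no. \<forall>n\<ge>no. norm (a n / real n - L) < e"
    proof (intro exI allI impI)
      fix n assume nN: "nat \<lceil>2 * M / e\<rceil> + 1 \<le> n"
      then have n: "n \<ge> 1" and "2 * M / e < real n" by linarith+
      then have "M / real n < e / 2" using e by (simp add: field_simps)
      then have "a n / real n < L + e"
        using subadditive_div_le[OF sub nn m n] am unfolding M_def by linarith
      moreover have "L \<le> a n / real n"
        unfolding L_def by (rule cINF_lower[OF bdd]) (use n in auto)
      ultimately show "norm (a n / real n - L) < e" by simp
    qed
  qed
qed

definition bin_inputs :: "nat \<Rightarrow> bool list pmf set" where
  "bin_inputs n = {P. set_pmf P \<subseteq> {xs. length xs = n}}"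

lemma finite_set_pmf_bin_inputs: "P \<in> bin_inputs n \<Longrightarrow> finite (set_pmf P)"
  unfolding bin_inputs_def by (rule finite_subset[OF _ finite_list_length]) auto

lemma return_pmf_replicate_in_bin_inputs: "return_pmf (replicate n False) \<in> bin_inputs n"
  unfolding bin_inputs_def by simp

lemma bin_del_max_info_eq_SUP:
  "b > 1 \<Longrightarrow> bin_del_max_info b d n = (SUP P\<in>bin_inputs n. del_info b d P)"
  unfolding bin_del_max_info_def bin_inputs_def[symmetric]
  by (rule SUP_cong[OF refl]) (simp add: mutual_info_chan_joint finite_set_pmf_bin_inputs)

lemma bdd_above_del_info_bin_inputs:
  assumes b: "b > 1"
  shows "bdd_above (del_info b d ` bin_inputs n)"
proof (rule bdd_aboveI2)
  fix P assume P: "P \<in> bin_inputs n"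
  have "del_info b d P \<le> pmf_entropy b P"
    by (rule del_info_le_pmf_entropy[OF finite_set_pmf_bin_inputs[OF P] b])
  also have "\<dots> \<le> log b (real (card {xs :: bool list. length xs = n}))"
    by (rule pmf_entropy_le_log_card[OF finite_list_length _ b]) (use P in \<open>auto simp: bin_inputs_def\<close>)
  finally show "del_info b d P \<le> log b (real (card {xs :: bool list. length xs = n}))" .
qed

lemma del_info_le_bin_del_max_info:
  "b > 1 \<Longrightarrow> P \<in> bin_inputs n \<Longrightarrow> del_info b d P \<le> bin_del_max_info b d n"
  unfolding bin_del_max_info_eq_SUP by (rule cSUP_upper[OF _ bdd_above_del_info_bin_inputs])

lemma bin_del_max_info_least:
  "b > 1 \<Longrightarrow> (\<And>P. P \<in> bin_inputs n \<Longrightarrow> del_info b d P \<le> c) \<Longrightarrow> bin_del_max_info b d n \<le> c"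
  unfolding bin_del_max_info_eq_SUP by (rule cSUP_least) (use return_pmf_replicate_in_bin_inputs in auto)

lemma bin_del_max_info_nonneg: "b > 1 \<Longrightarrow> 0 \<le> bin_del_max_info b d n"
  using del_info_le_bin_del_max_info[OF _ return_pmf_replicate_in_bin_inputs, of b d n]
    del_info_nonneg[of "return_pmf (replicate n False)" b d] by simp

lemma bin_del_max_info_subadditive:
  assumes b: "b > 1"
  shows "bin_del_max_info b d (m + n) \<le> bin_del_max_info b d m + bin_del_max_info b d n"
proof (rule bin_del_max_info_least[OF b])
  fix P assume P: "P \<in> bin_inputs (m + n)"
  have "map_pmf (take m) P \<in> bin_inputs m" "map_pmf (drop m) P \<in> bin_inputs n"
    using P by (auto simp: bin_inputs_def)
  then show "del_info b d P \<le> bin_del_max_info b d m + bin_del_max_info b d n"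
    using del_info_take_drop_le[OF finite_set_pmf_bin_inputs[OF P] b, of d m]
      del_info_le_bin_del_max_info[OF b, of "map_pmf (take m) P" m d]
      del_info_le_bin_del_max_info[OF b, of "map_pmf (drop m) P" n d] by linarith
qed

lemma LIMSEQ_bin_del_max_info_C2:
  assumes b: "b > 1"
  shows "(\<lambda>n. bin_del_max_info b d n / real n) \<longlonglongrightarrow> C2 b d"
proof -
  have "(\<lambda>n. bin_del_max_info b d n / real n) \<longlonglongrightarrow> (INF n\<in>{1..}. bin_del_max_info b d n / real n)"
    by (rule fekete_subadditive)
      (use bin_del_max_info_subadditive[OF b] bin_del_max_info_nonneg[OF b] in auto)
  then show ?thesis unfolding C2_def using limI by metis
qed

fun iid_concat :: "nat \<Rightarrow> 'a list pmf \<Rightarrow> 'a list pmf" where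
  "iid_concat 0 Q = return_pmf []"
| "iid_concat (Suc m) Q = map_pmf (\<lambda>(a, b). a @ b) (pair_pmf Q (iid_concat m Q))"

lemma iid_concat_in_bin_inputs: "Q \<in> bin_inputs n \<Longrightarrow> iid_concat m Q \<in> bin_inputs (m * n)"
  by (induction m) (auto simp: bin_inputs_def subset_iff)

lemma del_info_iid_concat_ge:
  assumes Q: "Q \<in> bin_inputs n" and b: "b > 1"
  shows "real m * (del_info b d Q - log b (real n + 1)) \<le> del_info b d (iid_concat m Q)"
proof (induction m)
  case (Suc m)
  have "del_info b d Q + del_info b d (iid_concat m Q) - log b (real n + 1)
      \<le> del_info b d (iid_concat (Suc m) Q)"
    unfolding iid_concat.simps
    by (rule del_info_append_ge[OF finite_set_pmf_bin_inputs[OF Q]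
          finite_set_pmf_bin_inputs[OF iid_concat_in_bin_inputs[OF Q]] b])
      (use Q in \<open>auto simp: bin_inputs_def\<close>)
  then show ?case using Suc by (simp add: algebra_simps)
qed simp

lemma del_info_le_C2:
  assumes b: "b > 1" and Q: "Q \<in> bin_inputs n"
  shows "del_info b d Q \<le> real n * C2 b d + log b (real n + 1)"
proof (cases "n = 0")
  case True
  then have "Q = return_pmf []"
    using Q by (auto simp: bin_inputs_def set_pmf_subset_singleton)
  then show ?thesis using True by simp
next
  case False
  define c where "c = del_info b d Q - log b (real n + 1)"
  have sm: "strict_mono (\<lambda>m. Suc m * n)" by (rule strict_monoI) (use False in simp)
  have "c / real n \<le> C2 b d"
  proof (rule LIMSEQ_le_const[OF LIMSEQ_subseq_LIMSEQ[OF LIMSEQ_bin_del_max_info_C2[OF b] sm]],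
         intro exI allI impI)
    fix m :: nat
    have "real (Suc m) * c \<le> del_info b d (iid_concat (Suc m) Q)"
      unfolding c_def by (rule del_info_iid_concat_ge[OF Q b])
    also have "\<dots> \<le> bin_del_max_info b d (Suc m * n)"
      by (rule del_info_le_bin_del_max_info[OF b iid_concat_in_bin_inputs[OF Q]])
    finally have "real (Suc m) * c / real (Suc m * n) \<le> bin_del_max_info b d (Suc m * n) / real (Suc m * n)"
      by (rule divide_right_mono) simp
    moreover have "real (Suc m) * c / real (Suc m * n) = c / real n"
      unfolding of_nat_mult by (rule mult_divide_mult_cancel_left) simp
    ultimately show "c / real n \<le> ((\<lambda>j. bin_del_max_info b d j / real j) \<circ> (\<lambda>m. Suc m * n)) m"
      by simp
  qed
  then have "c \<le> real n * C2 b d" using False by (simp add: field_simps)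
  then show ?thesis unfolding c_def by simp
qed

lemma del_info_binary_le_C2:
  fixes g :: "'a \<Rightarrow> bool"
  assumes b: "b > 1" and fQ: "finite (set_pmf Q)" and inj: "inj_on g S"
    and Q: "\<And>x. x \<in> set_pmf Q \<Longrightarrow> set x \<subseteq> S \<and> length x = n"
  shows "del_info b d Q \<le> real n * C2 b d + log b (real n + 1)"
proof -
  have "del_info b d (map_pmf (map g) Q) \<le> real n * C2 b d + log b (real n + 1)"
    by (rule del_info_le_C2[OF b]) (use Q in \<open>auto simp: bin_inputs_def\<close>)
  then show ?thesis using del_info_map_inj[OF fQ b inj, of d] Q by simp
qed

text \<open>
  Conditioning on the input length costs the entropy of the length, at most \<open>log (N + 1)\<close>.
\<close>
lemma del_info_binary_le_expected_length_C2:
  fixes g :: "'a \<Rightarrow> bool"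
  assumes b: "b > 1" and fQ: "finite (set_pmf Q)" and inj: "inj_on g S"
    and Q: "\<And>x. x \<in> set_pmf Q \<Longrightarrow> set x \<subseteq> S \<and> length x \<le> N"
  shows "del_info b d Q \<le> expect Q (\<lambda>x. real (length x)) * C2 b d + 2 * log b (real N + 1)"
proof -
  define pN where "pN = map_pmf length Q"
  have fN: "finite (set_pmf pN)" unfolding pN_def using fQ by simp
  have nN: "n \<le> N" if "n \<in> set_pmf pN" for n
    using that Q unfolding pN_def by auto
  have cond_bound: "del_info b d (cond_pmf Q {z. length z = n})
      \<le> real n * C2 b d + log b (real N + 1)" if n: "n \<in> set_pmf pN" for n
  proof -
    have set_cond: "set_pmf (cond_pmf Q {z. length z = n}) = set_pmf Q \<inter> {z. length z = n}"
      by (rule set_cond_pmf) (use n in \<open>auto simp: pN_def\<close>)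
    have "del_info b d (cond_pmf Q {z. length z = n}) \<le> real n * C2 b d + log b (real n + 1)"
      by (rule del_info_binary_le_C2[OF b _ inj]) (use fQ Q in \<open>auto simp: set_cond\<close>)
    also have "log b (real n + 1) \<le> log b (real N + 1)"
      using nN[OF n] b by simp
    finally show ?thesis by simp
  qed
  have "del_info b d Q \<le> pmf_entropy b pN + expect pN (\<lambda>n. del_info b d (cond_pmf Q {z. length z = n}))"
    unfolding pN_def by (rule del_info_le_cond[OF fQ b])
  also have "\<dots> \<le> log b (real N + 1) + expect pN (\<lambda>n. real n * C2 b d + log b (real N + 1))"
    using pmf_entropy_le_log_card[OF _ _ b, of "{0..N}" pN] nN expect_mono[OF cond_bound]
    by (fastforce simp: add.commute)
  also have "\<dots> = expect Q (\<lambda>x. real (length x)) * C2 b d + 2 * log b (real N + 1)"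
    unfolding pN_def
    by (simp add: expect_add expect_const fN fQ expect_map_pmf expect_cmult[of _ "C2 b d", simplified mult.commute])
  finally show ?thesis .
qed

section \<open>Subchannel decomposition\<close>

lemma subseq_k_labels_inj:
  "set xs \<subseteq> {1..2*K} \<Longrightarrow> set ys \<subseteq> {1..2*K} \<Longrightarrow> labels xs = labels ys \<Longrightarrow>
   (\<forall>j\<in>{1..K}. subseq_k j xs = subseq_k j ys) \<Longrightarrow> xs = ys"
proof (induction xs arbitrary: ys)
  case Nil
  then show ?case by (simp add: labels_def)
next
  case (Cons x xs)
  obtain y ys' where ys: "ys = y # ys'" using Cons.prems(3) by (cases ys) (auto simp: labels_def)
  have lab: "sublabel x = sublabel y" "labels xs = labels ys'"
    using Cons.prems(3) ys by (auto simp: labels_def)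
  have "sublabel x \<in> {1..K}" using Cons.prems(1) by (auto simp: sublabel_def)
  then have "subseq_k (sublabel x) (x # xs) = subseq_k (sublabel x) (y # ys')"
    using Cons.prems(4) ys by blast
  then have xy: "x = y" using lab by (simp add: subseq_k_def)
  have "subseq_k j xs = subseq_k j ys'" if "j \<in> {1..K}" for j
    using Cons.prems(4) that ys xy by (auto simp: subseq_k_def split: if_splits)
  then have "xs = ys'" using Cons.IH[of ys'] Cons.prems(1,2) lab ys by simp
  then show ?case using xy ys by simp
qed

text \<open>
  The outputs of subchannel \<open>k\<close> and of the subchannels before it are fed by disjoint parts of
  the input, so given the input they are independent.
\<close>
lemma pmf_entropy_subchannel_split:
  assumes b: "b > 1"
  shows "pmf_entropy b (map_pmf (\<lambda>y. (subseq_k k y, map (\<lambda>j. subseq_k j y) [1..<k])) (del_chan d x))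
       = pmf_entropy b (map_pmf (subseq_k k) (del_chan d x))
         + pmf_entropy b (map_pmf (\<lambda>y. map (\<lambda>j. subseq_k j y) [1..<k]) (del_chan d x))"
proof -
  define P1 where "P1 = (\<lambda>s. sublabel s = k)"
  define P2 where "P2 = (\<lambda>s. sublabel s < k)"
  define C where "C = (\<lambda>v. map (\<lambda>j. subseq_k j v) [1..<k])"
  have C_filter: "map (\<lambda>j. subseq_k j y) [1..<k] = C (filter P2 y)" for y
    unfolding C_def P2_def subseq_k_def by (rule map_cong[OF refl]) (auto simp: filter_filter intro!: filter_cong)
  have B: "subseq_k k = filter P1" unfolding subseq_k_def P1_def ..
  have "map_pmf (\<lambda>y. (subseq_k k y, map (\<lambda>j. subseq_k j y) [1..<k])) (del_chan d x)
      = map_pmf (\<lambda>(u, v). (u, C v)) (map_pmf (\<lambda>y. (filter P1 y, filter P2 y)) (del_chan d x))"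
    unfolding C_filter B by (simp add: map_pmf_comp)
  also have "\<dots> = pair_pmf (del_chan d (filter P1 x)) (map_pmf C (del_chan d (filter P2 x)))"
    by (subst map_pmf_filter_pair_del_chan) (auto simp: P1_def P2_def map_pair[of "\<lambda>u. u", simplified])
  finally show ?thesis
    unfolding C_filter B map_pmf_filter_del_chan map_pmf_comp[of C "filter P2", symmetric, unfolded o_def]
    by (simp add: pmf_entropy_pair_pmf finite_set_pmf_del_chan b)
qed

lemma cond_mutual_info_subchannel_le_del_info:
  fixes A :: "nat list \<Rightarrow> 'a"
  assumes b: "b > 1" and fP: "finite (set_pmf P)" and inj: "inj_on A (set_pmf P)"
  shows "cond_mutual_info b (chan_joint d P) (\<lambda>(x, y). A x) (\<lambda>(x, y). subseq_k k y)
           (\<lambda>(x, y). map (\<lambda>j. subseq_k j y) [1..<k])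
       \<le> del_info b d (map_pmf (subseq_k k) P)"
proof -
  define J where "J = chan_joint d P"
  define B where "B = subseq_k k"
  define C where "C = (\<lambda>y. map (\<lambda>j. subseq_k j y) [1..<k])"
  have case_eqs: "(\<lambda>(x, y). A x) = (\<lambda>w. A (fst w))" "(\<lambda>(x, y). subseq_k k y) = (\<lambda>w. B (snd w))"
    "(\<lambda>(x, y). map (\<lambda>j. subseq_k j y) [1..<k]) = (\<lambda>w. C (snd w))"
    unfolding B_def C_def by auto
  have Jeq: "J = bind_pmf P (\<lambda>x. map_pmf (Pair x) (del_chan d x))"
    unfolding J_def by (rule chan_joint_eq_bind_pmf)
  have fJ: "finite (set_pmf J)" unfolding Jeq by (rule finite_set_bind_pmf_Pair[OF fP finite_set_pmf_del_chan])
  have A_cong: "pmf_entropy b (map_pmf (\<lambda>w. (A (fst w), F w)) J) = pmf_entropy b (map_pmf (\<lambda>w. (fst w, F w)) J)"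
    for F :: "nat list \<times> nat list \<Rightarrow> 'c"
    by (rule pmf_entropy_map_pmf_cong[OF fJ b]) (use inj in \<open>auto simp: Jeq inj_on_eq_iff\<close>)
  have fmap: "finite (set_pmf (map_pmf g (del_chan d x)))" for g :: "nat list \<Rightarrow> 'c" and x
    by (simp add: finite_set_pmf_del_chan)
  have HXBC: "pmf_entropy b (map_pmf (\<lambda>w. (fst w, B (snd w), C (snd w))) J)
      = pmf_entropy b P + (expect P (\<lambda>x. pmf_entropy b (map_pmf B (del_chan d x)))
                            + expect P (\<lambda>x. pmf_entropy b (map_pmf C (del_chan d x))))"
    unfolding Jeq map_pmf_apsnd_bind_pmf_Pair[of "\<lambda>y. (B y, C y)"] pmf_entropy_chain_rule[OF fP fmap b]
    unfolding B_def C_def pmf_entropy_subchannel_split[OF b] by (simp add: expect_add)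
  have HXC: "pmf_entropy b (map_pmf (\<lambda>w. (fst w, C (snd w))) J)
      = pmf_entropy b P + expect P (\<lambda>x. pmf_entropy b (map_pmf C (del_chan d x)))"
    unfolding Jeq map_pmf_apsnd_bind_pmf_Pair by (rule pmf_entropy_chain_rule[OF fP fmap b])
  have HB: "map_pmf (\<lambda>w. B (snd w)) J = bind_pmf (map_pmf (subseq_k k) P) (del_chan d)"
    unfolding Jeq map_pmf_snd_bind_pmf_Pair B_def subseq_k_def
    by (simp add: map_pmf_filter_del_chan bind_map_pmf)
  have EB: "expect P (\<lambda>x. pmf_entropy b (map_pmf B (del_chan d x)))
          = expect (map_pmf (subseq_k k) P) (\<lambda>z. pmf_entropy b (del_chan d z))"
    unfolding B_def subseq_k_def by (simp add: map_pmf_filter_del_chan expect_map_pmf[OF fP])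
  show ?thesis
    using pmf_entropy_pair_le[OF fJ b, of "\<lambda>w. B (snd w)" "\<lambda>w. C (snd w)"]
    unfolding case_eqs J_def[symmetric] cond_mutual_info_eq_entropies[OF fJ] A_cong HXBC HXC HB EB
      del_info_def
    by linarith
qed

theorem lemma1:
  fixes K N k :: nat and d b :: real and P :: "nat list pmf"
  assumes "K \<ge> 1" and "N \<ge> 1"
    and "0 \<le> d" and "d \<le> 1"
    and "b > 1"
    and "set_pmf P \<subseteq> {xs. length xs = N \<and> set xs \<subseteq> {1..2*K}}"
    and "1 \<le> k" and "k \<le> K"
  shows "cond_mutual_info b (chan_joint d P)
           (\<lambda>(x, y). (map (\<lambda>j. subseq_k j x) [1..<K+1], labels x))
           (\<lambda>(x, y). subseq_k k y)
           (\<lambda>(x, y). map (\<lambda>j. subseq_k j y) [1..<k])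
         \<le> measure_pmf.expectation P (\<lambda>x. real (length (subseq_k k x))) * C2 b d
           + 2 * log b (real N + 1)"
proof -
  \<comment> \<open>The bound holds for every \<open>d\<close> and \<open>k\<close>.\<close>
  note b = \<open>b > 1\<close> and supp = \<open>set_pmf P \<subseteq> {xs. length xs = N \<and> set xs \<subseteq> {1..2*K}}\<close>
  have fP: "finite (set_pmf P)"
    by (rule finite_subset[OF _ finite_lists_length_eq[of "{1..2*K}" N]]) (use supp in auto)
  have inj: "inj_on (\<lambda>x. (map (\<lambda>j. subseq_k j x) [1..<K+1], labels x)) (set_pmf P)"
    by (rule inj_onI, rule subseq_k_labels_inj[of _ K]) (use supp in \<open>auto simp: map_eq_conv\<close>)
  have inj_sym: "inj_on (\<lambda>s. s = 2 * k) {s. sublabel s = k}"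
    by (rule inj_onI) (auto simp: sublabel_def)
  have "del_info b d (map_pmf (subseq_k k) P)
      \<le> expect (map_pmf (subseq_k k) P) (\<lambda>x. real (length x)) * C2 b d + 2 * log b (real N + 1)"
    by (rule del_info_binary_le_expected_length_C2[OF b _ inj_sym])
      (use fP supp in \<open>auto simp: subseq_k_def intro: order.trans[OF length_filter_le]\<close>)
  then show ?thesis
    using cond_mutual_info_subchannel_le_del_info[OF b fP inj, of d k]
    by (simp add: expect_map_pmf[OF fP] expect_eq_expectation[OF fP])
qed

end
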